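(* Let $M(t)\in\mathbb{R}^{n\times n}$ be symmetric and satisfy $\dot M=-(M\Phi+\Phi M)$ with $\Phi(t)$ symmetric, and suppose $M(t)=\sum_e\lambda_e(t)E_e(t)$ with distinct eigenvalues $\lambda_e(t)$ and orthogonal spectral projectors $E_e(t)$ varying differentiably (ranks constant). Then for each $e$, $$\dot\lambda_e=-2\lambda_e\,\frac{\operatorname{tr}(E_e\Phi E_e)}{\dim(E_e)},$$ where $\dim(E_e)=\operatorname{tr}(E_e)$ is the rank of $E_e$. *)

theory Defs
  imports "HOL-Analysis.Analysis"
begin

end

(*
  Sandwich the equation of motion between two copies of E_e.  Differentiating
  E_e E_f = delta_ef E_e and multiplying by E_e on both sides gives E_e E_f' E_e = 0
  for every f, so differentiating M = sum_f lambda_f E_f yields E_e M' E_e = lambda_e' E_e.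
  On the other side, M E_e = E_e M = lambda_e E_e turns E_e (M Phi + Phi M) E_e into
  2 lambda_e E_e Phi E_e.  Taking traces and dividing by tr E_e > 0 (E_e is a nonzero
  orthogonal projection) gives the formula.
*)

theory Submission
  imports Defs
begin

interpretation matrix_mult: bounded_bilinear "(**) :: real^'n^'m \<Rightarrow> real^'p^'n \<Rightarrow> real^'p^'m"
proof -
  have "bilinear ((**) :: real^'n^'m \<Rightarrow> real^'p^'n \<Rightarrow> real^'p^'m)"
    unfolding bilinear_def linear_iff
    by (auto simp: matrix_matrix_mult_def vec_eq_iff sum.distrib sum_distrib_left algebra_simps)
  then show "bounded_bilinear ((**) :: real^'n^'m \<Rightarrow> real^'p^'n \<Rightarrow> real^'p^'m)"
    by (rule bilinear_conv_bounded_bilinear[THEN iffD1])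
qed

lemma trace_scaleR: "trace (c *\<^sub>R (A::real^'n^'n)) = c * trace A"
  by (simp add: trace_def sum_distrib_left)

lemma trace_matrix_mult_transpose_self:
  "trace ((A::real^'n^'n) ** transpose A) = (\<Sum>i\<in>UNIV. \<Sum>j\<in>UNIV. (A$i$j)\<^sup>2)"
  by (simp add: trace_def matrix_matrix_mult_def transpose_def power2_eq_square)

lemma trace_pos_symmetric_idempotent:
  fixes P :: "real^'n^'n"
  assumes "transpose P = P" "P ** P = P" "P \<noteq> 0"
  shows "trace P > 0"
proof -
  obtain i j where "P$i$j \<noteq> 0"
    using assms(3) by (auto simp: vec_eq_iff)
  then have "0 < (P$i$j)\<^sup>2"
    by simp
  also have "\<dots> \<le> (\<Sum>j\<in>UNIV. (P$i$j)\<^sup>2)"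
    by (rule member_le_sum) auto
  also have "\<dots> \<le> (\<Sum>i\<in>UNIV. \<Sum>j\<in>UNIV. (P$i$j)\<^sup>2)"
    by (rule member_le_sum[where f = "\<lambda>i. \<Sum>j\<in>UNIV. (P$i$j)\<^sup>2"]) (auto intro: sum_nonneg)
  also have "\<dots> = trace P"
    using assms(1,2) by (simp add: trace_matrix_mult_transpose_self[symmetric])
  finally show ?thesis .
qed

definition orthogonal_idempotents :: "'k set \<Rightarrow> ('k \<Rightarrow> real^'n^'n) \<Rightarrow> bool" where
  "orthogonal_idempotents K E \<longleftrightarrow>
     (\<forall>f\<in>K. \<forall>g\<in>K. E f ** E g = (if f = g then E f else 0))"

lemma orthogonal_idempotents_mult_sum:
  fixes E :: "'k \<Rightarrow> real^'n^'n"
  assumes "orthogonal_idempotents K E" "finite K" "e \<in> K"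
  shows "(\<Sum>f\<in>K. c f *\<^sub>R E f) ** E e = c e *\<^sub>R E e"
    and "E e ** (\<Sum>f\<in>K. c f *\<^sub>R E f) = c e *\<^sub>R E e"
proof -
  have "(\<Sum>f\<in>K. c f *\<^sub>R E f) ** E e = (\<Sum>f\<in>K. if f = e then c e *\<^sub>R E e else 0)"
    using assms(1) unfolding orthogonal_idempotents_def
    by (auto simp: matrix_mult.sum_left matrix_mult.scaleR_left assms(3) intro!: sum.cong)
  then show "(\<Sum>f\<in>K. c f *\<^sub>R E f) ** E e = c e *\<^sub>R E e"
    using assms(2,3) by simp
  have "E e ** (\<Sum>f\<in>K. c f *\<^sub>R E f) = (\<Sum>f\<in>K. if f = e then c e *\<^sub>R E e else 0)"
    using assms(1) unfolding orthogonal_idempotents_def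
    by (auto simp: matrix_mult.sum_right matrix_mult.scaleR_right assms(3) intro!: sum.cong)
  then show "E e ** (\<Sum>f\<in>K. c f *\<^sub>R E f) = c e *\<^sub>R E e"
    using assms(2,3) by simp
qed

lemma derivative_sandwich_orthogonal_idempotents:
  fixes E :: "'k \<Rightarrow> real \<Rightarrow> real^'n^'n"
  assumes orth: "\<forall>\<^sub>F s in nhds t. orthogonal_idempotents K (\<lambda>f. E f s)"
    and deriv: "\<And>f. f \<in> K \<Longrightarrow> (E f has_vector_derivative D f) (at t)"
    and "e \<in> K" "f \<in> K"
  shows "E e t ** D f ** E e t = 0"
proof -
  obtain S where S: "open S" "t \<in> S" "\<And>s. s \<in> S \<Longrightarrow> orthogonal_idempotents K (\<lambda>f. E f s)"
    using orth by (auto simp: eventually_nhds)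
  have prod: "E g s ** E h s = (if g = h then E g s else 0)"
    if "s \<in> S" "g \<in> K" "h \<in> K" for s g h
    using S(3)[OF that(1)] that(2,3) unfolding orthogonal_idempotents_def by blast
  have "((\<lambda>s. E e s ** E f s) has_vector_derivative E e t ** D f + D e ** E f t) (at t)"
    using matrix_mult.has_vector_derivative[OF deriv deriv] \<open>e \<in> K\<close> \<open>f \<in> K\<close> .
  then have "((\<lambda>s. if e = f then E e s else 0) has_vector_derivative E e t ** D f + D e ** E f t) (at t)"
    by (rule has_vector_derivative_transform_within_open[OF _ S(1,2)])
       (simp add: prod \<open>e \<in> K\<close> \<open>f \<in> K\<close>)
  moreover have "((\<lambda>s. if e = f then E e s else 0) has_vector_derivative (if e = f then D e else 0)) (at t)"
    using deriv[OF \<open>e \<in> K\<close>] by auto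
  ultimately have "E e t ** D f + D e ** E f t = (if e = f then D e else 0)"
    by (rule vector_derivative_unique_at)
  then have "E e t ** (E e t ** D f + D e ** E f t) ** E e t =
      (if e = f then E e t ** D e ** E e t else 0)"
    by auto
  moreover have "E e t ** D e ** E f t ** E e t = (if e = f then E e t ** D e ** E e t else 0)"
    using prod[OF S(2) \<open>f \<in> K\<close> \<open>e \<in> K\<close>] by (auto simp flip: matrix_mul_assoc)
  moreover have "E e t ** E e t = E e t"
    using prod[OF S(2) \<open>e \<in> K\<close> \<open>e \<in> K\<close>] by simp
  ultimately show ?thesis
    by (simp add: matrix_add_ldistrib matrix_mult.add_left matrix_mul_assoc)
qed

lemma spectral_sum_derivative_sandwich:
  fixes M :: "real \<Rightarrow> real^'n^'n" and E :: "'k \<Rightarrow> real \<Rightarrow> real^'n^'n"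
  assumes "finite K" "e \<in> K"
    and orth: "\<forall>\<^sub>F s in nhds t. orthogonal_idempotents K (\<lambda>f. E f s)"
    and decomp: "\<forall>\<^sub>F s in nhds t. M s = (\<Sum>f\<in>K. lam f s *\<^sub>R E f s)"
    and M': "(M has_vector_derivative M') (at t)"
    and lam_diff: "\<And>f. f \<in> K \<Longrightarrow> lam f differentiable (at t)"
    and E_diff: "\<And>f. f \<in> K \<Longrightarrow> E f differentiable (at t)"
  shows "E e t ** M' ** E e t = deriv (lam e) t *\<^sub>R E e t"
proof -
  define D where "D f = vector_derivative (E f) (at t)" for f
  have dE: "(E f has_vector_derivative D f) (at t)" if "f \<in> K" for f
    unfolding D_def using E_diff[OF that] by (rule vector_derivative_works[THEN iffD1])
  have dlam: "(lam f has_real_derivative deriv (lam f) t) (at t)" if "f \<in> K" for f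
    using lam_diff[OF that] by (simp add: DERIV_deriv_iff_real_differentiable)
  obtain S where S: "open S" "t \<in> S" "\<And>s. s \<in> S \<Longrightarrow> M s = (\<Sum>f\<in>K. lam f s *\<^sub>R E f s)"
    using decomp by (auto simp: eventually_nhds)
  have "((\<lambda>s. \<Sum>f\<in>K. lam f s *\<^sub>R E f s) has_vector_derivative
      (\<Sum>f\<in>K. lam f t *\<^sub>R D f + deriv (lam f) t *\<^sub>R E f t)) (at t)"
    by (intro has_vector_derivative_sum has_vector_derivative_scaleR dlam dE)
  then have "(M has_vector_derivative
      (\<Sum>f\<in>K. lam f t *\<^sub>R D f + deriv (lam f) t *\<^sub>R E f t)) (at t)"
    by (rule has_vector_derivative_transform_within_open[OF _ S(1,2)]) (simp add: S(3))
  then have "M' = (\<Sum>f\<in>K. lam f t *\<^sub>R D f) + (\<Sum>f\<in>K. deriv (lam f) t *\<^sub>R E f t)"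
    using vector_derivative_unique_at[OF M'] by (simp add: sum.distrib)
  moreover have "E e t ** (\<Sum>f\<in>K. lam f t *\<^sub>R D f) ** E e t = 0"
    using derivative_sandwich_orthogonal_idempotents[OF orth dE \<open>e \<in> K\<close>]
    by (simp add: matrix_mult.sum_left matrix_mult.sum_right matrix_mult.scaleR_left
        matrix_mult.scaleR_right)
  moreover have "E e t ** (\<Sum>f\<in>K. deriv (lam f) t *\<^sub>R E f t) ** E e t = deriv (lam e) t *\<^sub>R E e t"
  proof -
    have orth_t: "orthogonal_idempotents K (\<lambda>f. E f t)"
      using orth eventually_nhds_x_imp_x by blast
    then have "E e t ** E e t = E e t"
      using \<open>e \<in> K\<close> by (simp add: orthogonal_idempotents_def)
    then show ?thesis
      using orthogonal_idempotents_mult_sum(2)[OF orth_t \<open>finite K\<close> \<open>e \<in> K\<close>]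
      by (simp add: matrix_mult.scaleR_left)
  qed
  ultimately show ?thesis
    by (simp add: matrix_add_ldistrib matrix_mult.add_left)
qed

lemma anticommutator_sandwich_eigenprojection:
  fixes M Phi P :: "real^'n^'n"
  assumes "M ** P = c *\<^sub>R P" "P ** M = c *\<^sub>R P"
  shows "P ** (- (M ** Phi + Phi ** M)) ** P = (- 2 * c) *\<^sub>R (P ** Phi ** P)"
proof -
  have "P ** (M ** Phi + Phi ** M) ** P = (P ** M) ** Phi ** P + P ** Phi ** (M ** P)"
    by (simp add: matrix_add_ldistrib matrix_mult.add_left matrix_mul_assoc)
  also have "\<dots> = (2 * c) *\<^sub>R (P ** Phi ** P)"
    by (simp add: assms matrix_mult.scaleR_left matrix_mult.scaleR_right scaleR_2
        flip: scaleR_add_left)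
  finally show ?thesis
    by (simp add: matrix_mult.minus_left matrix_mult.minus_right del: minus_add_distrib)
qed

theorem corollary8:
  fixes M Phi :: "real \<Rightarrow> real^'n^'n"
    and lam :: "'k \<Rightarrow> real \<Rightarrow> real"
    and E :: "'k \<Rightarrow> real \<Rightarrow> real^'n^'n"
    and K :: "'k set" and T :: "real set"
  assumes T_open: "open T"
    and K_fin: "finite K"
    and M_sym: "\<And>t. t \<in> T \<Longrightarrow> transpose (M t) = M t"
    and Phi_sym: "\<And>t. t \<in> T \<Longrightarrow> transpose (Phi t) = Phi t"
    and M_ode: "\<And>t. t \<in> T \<Longrightarrow>
        (M has_vector_derivative (- (M t ** Phi t + Phi t ** M t))) (at t)"
    and M_decomp: "\<And>t. t \<in> T \<Longrightarrow> M t = (\<Sum>e\<in>K. lam e t *\<^sub>R E e t)"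
    and lam_distinct: "\<And>t. t \<in> T \<Longrightarrow> inj_on (\<lambda>e. lam e t) K"
    and E_sym: "\<And>e t. e \<in> K \<Longrightarrow> t \<in> T \<Longrightarrow> transpose (E e t) = E e t"
    and E_idem: "\<And>e t. e \<in> K \<Longrightarrow> t \<in> T \<Longrightarrow> E e t ** E e t = E e t"
    and E_orth: "\<And>e e' t. e \<in> K \<Longrightarrow> e' \<in> K \<Longrightarrow> e \<noteq> e' \<Longrightarrow> t \<in> T \<Longrightarrow>
        E e t ** E e' t = 0"
    and E_sum: "\<And>t. t \<in> T \<Longrightarrow> (\<Sum>e\<in>K. E e t) = mat 1"
    and E_nonzero: "\<And>e t. e \<in> K \<Longrightarrow> t \<in> T \<Longrightarrow> E e t \<noteq> 0"
    and lam_diff: "\<And>e t. e \<in> K \<Longrightarrow> t \<in> T \<Longrightarrow> lam e differentiable (at t)"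
    and E_diff: "\<And>e t. e \<in> K \<Longrightarrow> t \<in> T \<Longrightarrow> E e differentiable (at t)"
    and rank_const: "\<And>e t s. e \<in> K \<Longrightarrow> t \<in> T \<Longrightarrow> s \<in> T \<Longrightarrow>
        rank (E e t) = rank (E e s)"
    and e_in: "e \<in> K" and t_in: "t \<in> T"
  shows "(lam e has_real_derivative
           (- 2 * lam e t * trace (E e t ** Phi t ** E e t) / trace (E e t))) (at t)"
proof -
  have orth: "\<forall>\<^sub>F s in nhds t. orthogonal_idempotents K (\<lambda>f. E f s)"
    and decomp: "\<forall>\<^sub>F s in nhds t. M s = (\<Sum>f\<in>K. lam f s *\<^sub>R E f s)"
    using T_open t_in E_idem E_orth M_decomp
    by (auto simp: eventually_nhds orthogonal_idempotents_def)
  have "E e t ** (- (M t ** Phi t + Phi t ** M t)) ** E e t = deriv (lam e) t *\<^sub>R E e t"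
    using spectral_sum_derivative_sandwich[OF K_fin e_in orth decomp M_ode[OF t_in]]
      lam_diff E_diff t_in by blast
  moreover have "M t ** E e t = lam e t *\<^sub>R E e t" "E e t ** M t = lam e t *\<^sub>R E e t"
    using orthogonal_idempotents_mult_sum[OF eventually_nhds_x_imp_x[OF orth] K_fin e_in]
    by (simp_all add: M_decomp[OF t_in])
  ultimately have "deriv (lam e) t *\<^sub>R E e t = (- 2 * lam e t) *\<^sub>R (E e t ** Phi t ** E e t)"
    using anticommutator_sandwich_eigenprojection by metis
  then have "deriv (lam e) t * trace (E e t) = - 2 * lam e t * trace (E e t ** Phi t ** E e t)"
    by (metis trace_scaleR)
  moreover have "trace (E e t) > 0"
    using trace_pos_symmetric_idempotent E_sym E_idem E_nonzero e_in t_in by blast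
  ultimately have "deriv (lam e) t = - 2 * lam e t * trace (E e t ** Phi t ** E e t) / trace (E e t)"
    by (simp add: field_simps)
  then show ?thesis
    using lam_diff[OF e_in t_in] DERIV_deriv_iff_real_differentiable by metis
qed

end
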